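(* Assume $\mathcal I\neq\emptyset$. If the maximal isotropic subspace $\mathcal M=\mathcal M(A,B)$ is strictly positive, then $$\mathbb I+[\mathbb I-\mathfrak S(i\varkappa;\mathcal M)T(i\varkappa;\underline a)]^{-1}\mathfrak S(i\varkappa;\mathcal M)\succ0$$ holds for all sufficiently large $\varkappa\geq0$.
   Context: Let $\mathcal G$ be a finite connected graph with sets $\mathcal I$ of internal edges with lengths $\underline a=\{a_i\}$, $a_i>0$, and $\mathcal E$ of external edges. $\mathcal K=\mathcal K_{\mathcal E}\oplus\mathcal K^{(-)}_{\mathcal I}\oplus\mathcal K^{(+)}_{\mathcal I}\cong\mathbb C^{|\mathcal E|}\oplus\mathbb C^{|\mathcal I|}\oplus\mathbb C^{|\mathcal I|}$, ${}^d\mathcal K=\mathcal K\oplus\mathcal K$. Maximal isotropic subspaces of ${}^d\mathcal K$ (for the form $\langle\chi,J\chi'\rangle$, $J=\begin{pmatrix}0&\mathbb I\\-\mathbb I&0\end{pmatrix}$) are $\mathcal M(A,B)=\{\chi_1\oplus\chi_2:A\chi_1+B\chi_2=0\}$ with $(A,B)$ of rank $\dim\mathcal K$ and $AB^\dagger$ self-adjoint. $\mathfrak S(\mathsf k;\mathcal M)=-(A+i\mathsf kB)^{-1}(A-i\mathsf kB)$ when the inverse exists. $T(\mathsf k;\underline a)=\begin{pmatrix}0&0&0\\0&0&e^{i\mathsf k\underline a}\\0&e^{i\mathsf k\underline a}&0\end{pmatrix}$ w.r.t. $\mathcal K_{\mathcal E}\oplus\mathcal K^{(-)}_{\mathcal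 I}\oplus\mathcal K^{(+)}_{\mathcal I}$, $e^{i\mathsf k\underline a}=\operatorname{diag}(e^{i\mathsf ka_i})$. $C\succ0$ ($C\succcurlyeq0$) means all matrix entries are positive (nonnegative). $\mathcal M$ is strictly positive if there is $\varkappa_0\ge0$ with $\mathbb I+\mathfrak S(i\varkappa;\mathcal M)\succ0$ for all $\varkappa\ge\varkappa_0$. *)

theory Defs
  imports "Jordan_Normal_Form.Schur_Decomposition" "Jordan_Normal_Form.DL_Rank"
begin

(* Inverse of an n x n complex matrix (meaningful when it is invertible). *)
definition mat_inv :: "nat \<Rightarrow> complex mat \<Rightarrow> complex mat" where
  "mat_inv n M = (SOME N. N \<in> carrier_mat n n \<and> M * N = 1\<^sub>m n \<and> N * M = 1\<^sub>m n)"

definition block_AB :: "complex mat \<Rightarrow> complex mat \<Rightarrow> complex mat" where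
  "block_AB A B = mat (dim_row A) (dim_col A + dim_col B)
     (\<lambda>(i,j). if j < dim_col A then A $$ (i,j) else B $$ (i, j - dim_col A))"

definition max_isotropic :: "nat \<Rightarrow> complex mat \<Rightarrow> complex mat \<Rightarrow> bool" where
  "max_isotropic n A B \<longleftrightarrow> A \<in> carrier_mat n n \<and> B \<in> carrier_mat n n
     \<and> vec_space.rank n (block_AB A B) = n
     \<and> mat_adjoint (A * mat_adjoint B) = A * mat_adjoint B"

definition scat :: "complex \<Rightarrow> complex mat \<Rightarrow> complex mat \<Rightarrow> complex mat" where
  "scat k A B = - (mat_inv (dim_row A) (A + (\<i> * k) \<cdot>\<^sub>m B) * (A - (\<i> * k) \<cdot>\<^sub>m B))"

(* T(k; a) w.r.t. K_E (+) K_I^- (+) K_I^+, with |E| = nE, |I| = nI;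
   indices 0..nE-1 external, nE..nE+nI-1 the K_I^- copy, nE+nI..nE+2nI-1 the K_I^+ copy *)
definition Tmat :: "nat \<Rightarrow> nat \<Rightarrow> (nat \<Rightarrow> real) \<Rightarrow> complex \<Rightarrow> complex mat" where
  "Tmat nE nI a k = mat (nE + 2 * nI) (nE + 2 * nI) (\<lambda>(i,j).
      if nE \<le> i \<and> i < nE + nI \<and> j = i + nI then exp (\<i> * k * of_real (a (i - nE)))
      else if nE + nI \<le> i \<and> j + nI = i then exp (\<i> * k * of_real (a (i - nE - nI)))
      else 0)"

(* C \<succ> 0: all entries positive (in the order of HOL-Library.Complex_Order:
   real and > 0) *)
definition mat_pos :: "complex mat \<Rightarrow> bool" where
  "mat_pos C \<longleftrightarrow> (\<forall>i < dim_row C. \<forall>j < dim_col C. 0 < C $$ (i,j))"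

definition strictly_positive :: "complex mat \<Rightarrow> complex mat \<Rightarrow> bool" where
  "strictly_positive A B \<longleftrightarrow> (\<exists>\<kappa>0::real \<ge> 0. \<forall>\<kappa> \<ge> \<kappa>0.
      invertible_mat (A + (\<i> * (\<i> * of_real \<kappa>)) \<cdot>\<^sub>m B)
      \<and> mat_pos (1\<^sub>m (dim_row A) + scat (\<i> * of_real \<kappa>) A B))"

end

(* On the imaginary axis k = i kappa the matrix T(i kappa) is real, with entries at most
   exp (- alpha kappa) for alpha = min a_i.  By Cramer's rule every entry of
   S(i kappa) = - (A - kappa B)^-1 (A + kappa B) is a quotient of polynomials in kappa, and strict
   positivity makes I + S(i kappa) a real matrix with positive entries.  Polynomials grow more
   slowly than any exponential, so for each eps > 0 eventually |S_ij| <= exp (eps kappa) and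
   (I + S)_ij >= exp (- eps kappa).  Then E = S T has entries O(exp ((eps - alpha) kappa)), a
   maximum-norm estimate gives Y = (I - E)^-1 with entries at most 2, and
   I + Y S = (I + S) + Y E S, where the perturbation Y E S is O(exp ((2 eps - alpha) kappa)).
   For 3 eps < alpha it is eventually dominated by exp (- eps kappa). *)

theory Submission
  imports Defs "HOL-Real_Asymp.Real_Asymp"
begin

section \<open>Growth of polynomials and rational functions\<close>

lemma norm_poly_over_power_tendsto:
  fixes p :: "complex poly"
  shows "((\<lambda>x::real. cmod (poly p (of_real x)) / x ^ degree p) \<longlongrightarrow> cmod (lead_coeff p)) at_top"
proof -
  have "((\<lambda>x::real. poly p (of_real x) / of_real x ^ degree p) \<longlongrightarrow> lead_coeff p) at_top"
    using filterlim_compose[OF poly_divide_tendsto_aux[of p] filterlim_of_real_at_infinity] by simp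
  from tendsto_norm[OF this]
  have "((\<lambda>x::real. cmod (poly p (of_real x)) / \<bar>x\<bar> ^ degree p) \<longlongrightarrow> cmod (lead_coeff p)) at_top"
    by (simp add: norm_divide norm_power)
  then show ?thesis
    by (rule tendsto_cong[THEN iffD1, rotated])
      (use eventually_gt_at_top[of 0] in \<open>eventually_elim, simp\<close>)
qed

lemma norm_poly_eventually_le_exp:
  fixes p :: "complex poly"
  assumes "e > 0"
  shows "\<forall>\<^sub>F x in at_top. cmod (poly p (of_real x)) \<le> exp (e * x)"
proof -
  have "((\<lambda>x::real. x ^ degree p / exp (e * x)) \<longlongrightarrow> 0) at_top"
    using assms by real_asymp
  from tendsto_mult[OF norm_poly_over_power_tendsto this]
  have "((\<lambda>x::real. cmod (poly p (of_real x)) / x ^ degree p * (x ^ degree p / exp (e * x)))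
      \<longlongrightarrow> 0) at_top"
    by (simp only: mult_zero_right)
  then have "\<forall>\<^sub>F x in at_top.
      cmod (poly p (of_real x)) / x ^ degree p * (x ^ degree p / exp (e * x)) < 1"
    by (rule order_tendstoD) simp
  then show ?thesis
    using eventually_gt_at_top[of 0] by eventually_elim (simp add: field_simps)
qed

lemma norm_poly_eventually_ge_exp:
  fixes p :: "complex poly"
  assumes "p \<noteq> 0" "e > 0"
  shows "\<forall>\<^sub>F x in at_top. exp (- (e * x)) \<le> cmod (poly p (of_real x))"
proof -
  have grow: "filterlim (\<lambda>x::real. x ^ degree p * exp (e * x)) at_top at_top"
    using assms(2) by real_asymp
  have "filterlim
      (\<lambda>x::real. cmod (poly p (of_real x)) / x ^ degree p * (x ^ degree p * exp (e * x)))
      at_top at_top"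
    by (rule filterlim_tendsto_pos_mult_at_top[OF norm_poly_over_power_tendsto _ grow])
      (use assms(1) in simp)
  then have "\<forall>\<^sub>F x in at_top.
      1 \<le> cmod (poly p (of_real x)) / x ^ degree p * (x ^ degree p * exp (e * x))"
    by (simp add: filterlim_at_top)
  then show ?thesis
    using eventually_gt_at_top[of 0] by eventually_elim (simp add: field_simps exp_minus)
qed

lemma rational_eventually_le_exp:
  fixes f :: "real \<Rightarrow> complex" and d q :: "complex poly"
  assumes "\<forall>\<^sub>F x in at_top. f x * poly d (of_real x) = poly q (of_real x)" "d \<noteq> 0" "e > 0"
  shows "\<forall>\<^sub>F x in at_top. cmod (f x) \<le> exp (e * x)"
  using assms(1) norm_poly_eventually_ge_exp[OF assms(2) half_gt_zero[OF assms(3)]]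
    norm_poly_eventually_le_exp[OF half_gt_zero[OF assms(3)], of q]
proof eventually_elim
  case (elim x)
  have "cmod (f x) * exp (- (e / 2 * x)) \<le> cmod (f x) * cmod (poly d (of_real x))"
    using elim by (intro mult_left_mono) auto
  also have "\<dots> \<le> exp (e / 2 * x)"
    using elim by (metis norm_mult)
  finally show ?case
    by (simp add: exp_minus field_simps flip: exp_add)
qed

lemma rational_eventually_ge_exp:
  fixes f :: "real \<Rightarrow> complex" and d q :: "complex poly"
  assumes "\<forall>\<^sub>F x in at_top. f x * poly d (of_real x) = poly q (of_real x)"
    and "\<forall>\<^sub>F x in at_top. f x \<noteq> 0" and "d \<noteq> 0" "e > 0"
  shows "\<forall>\<^sub>F x in at_top. exp (- (e * x)) \<le> cmod (f x)"
proof -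
  have "\<forall>\<^sub>F x in at_top. poly q (of_real x) \<noteq> 0"
    using assms(1,2) norm_poly_eventually_ge_exp[OF assms(3,4)]
  proof eventually_elim
    case (elim x)
    then have "poly d (of_real x) \<noteq> 0"
      by (metis exp_gt_zero norm_zero not_le)
    with elim show ?case
      by (metis mult_eq_0_iff)
  qed
  then have "q \<noteq> 0"
    by (auto dest: eventually_happens')
  show ?thesis
    using assms(1) norm_poly_eventually_ge_exp[OF \<open>q \<noteq> 0\<close> half_gt_zero[OF assms(4)]]
      norm_poly_eventually_le_exp[OF half_gt_zero[OF assms(4)], of d]
  proof eventually_elim
    case (elim x)
    have "exp (- (e / 2 * x)) \<le> cmod (f x) * cmod (poly d (of_real x))"
      using elim by (metis norm_mult)
    also have "\<dots> \<le> cmod (f x) * exp (e / 2 * x)"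
      using elim by (intro mult_left_mono) auto
    finally show ?case
      by (simp add: exp_minus field_simps flip: exp_add)
  qed
qed

lemma rational_eventually_bounds:
  fixes f :: "real \<Rightarrow> complex" and c :: complex and d q :: "complex poly"
  assumes "\<forall>\<^sub>F x in at_top. f x * poly d (of_real x) = poly q (of_real x)"
    and "\<forall>\<^sub>F x in at_top. 0 < c + f x" and "Im c = 0" "d \<noteq> 0" "e > 0"
  shows "\<forall>\<^sub>F x in at_top. Im (f x) = 0 \<and> cmod (f x) \<le> exp (e * x) \<and> exp (- (e * x)) \<le> Re (c + f x)"
proof -
  have "\<forall>\<^sub>F x in at_top. (c + f x) * poly d (of_real x) = poly (smult c d + q) (of_real x)"
    using assms(1) by eventually_elim (simp add: distrib_right)
  moreover have "\<forall>\<^sub>F x in at_top. c + f x \<noteq> 0"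
    using assms(2) by eventually_elim auto
  ultimately have "\<forall>\<^sub>F x in at_top. exp (- (e * x)) \<le> cmod (c + f x)"
    using assms(4,5) by (rule rational_eventually_ge_exp)
  with rational_eventually_le_exp[OF assms(1,4,5)] assms(2) show ?thesis
    by eventually_elim (use assms(3) in \<open>auto simp: less_complex_def cmod_eq_Re\<close>)
qed

lemma eventually_all_entries:
  fixes n m :: nat
  assumes "\<And>i j. i < n \<Longrightarrow> j < m \<Longrightarrow> \<forall>\<^sub>F x in F. P x i j"
  shows "\<forall>\<^sub>F x in F. \<forall>i<n. \<forall>j<m. P x i j"
proof -
  have "\<forall>\<^sub>F x in F. \<forall>i\<in>{..<n}. \<forall>j\<in>{..<m}. P x i j"
    using assms by (simp add: eventually_ball_finite_distrib)
  then show ?thesis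
    by (rule eventually_mono) auto
qed

lemma rational_mat_eventually_bounds:
  fixes M :: "real \<Rightarrow> complex mat" and D :: "complex poly" and Q :: "complex poly mat"
  assumes "D \<noteq> 0" "e > 0"
    and "\<forall>\<^sub>F x in at_top. M x \<in> carrier_mat n n \<and> mat_pos (1\<^sub>m n + M x)
      \<and> (\<forall>i<n. \<forall>j<n. M x $$ (i,j) * poly D (of_real x) = poly (Q $$ (i,j)) (of_real x))"
  shows "\<forall>\<^sub>F x in at_top. M x \<in> carrier_mat n n \<and> (\<forall>i<n. \<forall>j<n. Im (M x $$ (i,j)) = 0
    \<and> cmod (M x $$ (i,j)) \<le> exp (e * x) \<and> exp (- (e * x)) \<le> Re ((1\<^sub>m n + M x) $$ (i,j)))"
proof -
  have "\<forall>\<^sub>F x in at_top. Im (M x $$ (i,j)) = 0 \<and> cmod (M x $$ (i,j)) \<le> exp (e * x)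
    \<and> exp (- (e * x)) \<le> Re ((if i = j then 1 else 0) + M x $$ (i,j))" if "i < n" "j < n" for i j
  proof (rule rational_eventually_bounds[OF _ _ _ assms(1,2)])
    show "\<forall>\<^sub>F x in at_top. M x $$ (i,j) * poly D (of_real x) = poly (Q $$ (i,j)) (of_real x)"
      using assms(3) by eventually_elim (use that in blast)
    show "\<forall>\<^sub>F x in at_top. 0 < (if i = j then 1 else 0) + M x $$ (i,j)"
      using assms(3)
    proof eventually_elim
      case (elim x)
      then have "0 < (1\<^sub>m n + M x) $$ (i,j)" "dim_row (M x) = n" "dim_col (M x) = n"
        using that unfolding mat_pos_def by auto
      then show ?case
        using that by simp
    qed
  qed simp
  then have "\<forall>\<^sub>F x in at_top. \<forall>i<n. \<forall>j<n. Im (M x $$ (i,j)) = 0 \<and> cmod (M x $$ (i,j)) \<le> exp (e * x)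
    \<and> exp (- (e * x)) \<le> Re ((if i = j then 1 else 0) + M x $$ (i,j))"
    by (rule eventually_all_entries)
  with assms(3) show ?thesis
    by eventually_elim auto
qed

lemma exp_neg_eventually_small:
  fixes c K :: real
  assumes "c > 0"
  shows "\<forall>\<^sub>F x in at_top. K * exp (- (c * x)) < 1"
proof -
  have "((\<lambda>x. K * exp (- (c * x))) \<longlongrightarrow> 0) at_top"
    using assms by real_asymp
  then show ?thesis
    by (rule order_tendstoD) simp
qed

lemma exp_tradeoff_eventually_small:
  fixes e \<alpha> :: real
  assumes "3 * e < \<alpha>" "0 < e"
  shows "\<forall>\<^sub>F x in at_top. real n ^ 2 * exp (e * x) * exp (- (\<alpha> * x)) \<le> 1/2
    \<and> 2 * real n ^ 3 * exp (e * x) ^ 2 * exp (- (\<alpha> * x)) < exp (- (e * x))"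
proof -
  have "0 < \<alpha> - e" "0 < \<alpha> - 3 * e"
    using assms by auto
  from exp_neg_eventually_small[OF this(1), of "2 * real n ^ 2"]
    exp_neg_eventually_small[OF this(2), of "2 * real n ^ 3"]
  show ?thesis
  proof eventually_elim
    case (elim x)
    have "exp (e * x) * exp (- (\<alpha> * x)) = exp (- ((\<alpha> - e) * x))"
      by (simp add: algebra_simps flip: exp_add)
    moreover have "exp (e * x) ^ 2 * exp (- (\<alpha> * x)) = exp (- ((\<alpha> - 3 * e) * x)) * exp (- (e * x))"
      by (simp add: algebra_simps power2_eq_square flip: exp_add)
    ultimately show ?case
      using elim mult_strict_right_mono[OF elim(2) exp_gt_zero[of "- (e * x)"]]
      by (simp add: mult.assoc)
  qed
qed

lemma eventually_at_top_nonneg_threshold: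
  fixes P :: "real \<Rightarrow> bool"
  assumes "\<forall>\<^sub>F x in at_top. P x"
  shows "\<exists>x0 \<ge> 0. \<forall>x \<ge> x0. P x"
proof -
  obtain x0 where "\<forall>x \<ge> x0. P x"
    using assms unfolding eventually_at_top_linorder by blast
  then show ?thesis
    by (intro exI[of _ "max x0 0"]) auto
qed

section \<open>Perturbations of the identity matrix\<close>

lemma abs_mult_mat_entry_le:
  fixes A B :: "real mat"
  assumes "A \<in> carrier_mat n n" "B \<in> carrier_mat n n"
    and "\<forall>i<n. \<forall>j<n. \<bar>A $$ (i,j)\<bar> \<le> a" "\<forall>i<n. \<forall>j<n. \<bar>B $$ (i,j)\<bar> \<le> b"
    and "i < n" "j < n"
  shows "\<bar>(A * B) $$ (i,j)\<bar> \<le> n * a * b"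
proof -
  have "\<bar>(A * B) $$ (i,j)\<bar> = \<bar>\<Sum>k<n. A $$ (i,k) * B $$ (k,j)\<bar>"
    using assms by (simp add: scalar_prod_def lessThan_atLeast0)
  also have "\<dots> \<le> (\<Sum>k<n. \<bar>A $$ (i,k)\<bar> * \<bar>B $$ (k,j)\<bar>)"
    unfolding abs_mult[symmetric] by (rule sum_abs)
  also have "\<dots> \<le> (\<Sum>k<n. a * b)"
    using assms(3-6) by (intro sum_mono mult_mono) (auto intro: order_trans[OF abs_ge_zero])
  finally show ?thesis by simp
qed

lemma abs_vec_le_of_perturbed_identity:
  fixes E :: "real mat"
  assumes E: "E \<in> carrier_mat n n" "\<forall>i<n. \<forall>j<n. \<bar>E $$ (i,j)\<bar> \<le> e" "n * e \<le> 1/2"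
    and v: "v \<in> carrier_vec n" "\<forall>i<n. \<bar>((1\<^sub>m n - E) *\<^sub>v v) $ i\<bar> \<le> w"
    and "k < n"
  shows "\<bar>v $ k\<bar> \<le> 2 * w"
proof -
  define \<mu> where "\<mu> = Max ((\<lambda>i. \<bar>v $ i\<bar>) ` {..<n})"
  have le_mu: "\<bar>v $ i\<bar> \<le> \<mu>" if "i < n" for i
    unfolding \<mu>_def using that by auto
  have "\<mu> \<in> (\<lambda>i. \<bar>v $ i\<bar>) ` {..<n}"
    unfolding \<mu>_def using \<open>k < n\<close> by (intro Max_in) auto
  then obtain i where i: "i < n" "\<bar>v $ i\<bar> = \<mu>"
    by auto
  have "e \<ge> 0"
    using E(2) \<open>k < n\<close> by (meson abs_ge_zero order_trans)
  have "(1\<^sub>m n - E) *\<^sub>v v = v - E *\<^sub>v v"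
    using minus_mult_distrib_mat_vec[OF one_carrier_mat E(1) v(1)] v(1) by simp
  then have "v $ i = ((1\<^sub>m n - E) *\<^sub>v v) $ i + (\<Sum>k<n. E $$ (i,k) * v $ k)"
    using E v i by (simp add: scalar_prod_def lessThan_atLeast0)
  then have "\<mu> \<le> \<bar>((1\<^sub>m n - E) *\<^sub>v v) $ i\<bar> + \<bar>\<Sum>k<n. E $$ (i,k) * v $ k\<bar>"
    using i by (metis abs_triangle_ineq)
  also have "\<dots> \<le> w + (\<Sum>k<n. \<bar>E $$ (i,k)\<bar> * \<bar>v $ k\<bar>)"
    using v(2) i by (intro add_mono) (auto simp flip: abs_mult)
  also have "(\<Sum>k<n. \<bar>E $$ (i,k)\<bar> * \<bar>v $ k\<bar>) \<le> (\<Sum>k<n. e * \<mu>)"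
    using E(2) i le_mu \<open>e \<ge> 0\<close> by (intro sum_mono mult_mono) auto
  also have "\<dots> \<le> \<mu> / 2"
    using mult_right_mono[OF E(3), of \<mu>] le_mu[OF i(1)] by (simp add: mult.assoc)
  finally show ?thesis
    using le_mu[OF \<open>k < n\<close>] by simp
qed

lemma inverse_by_adj_mat:
  fixes M :: "'a::field mat"
  assumes "M \<in> carrier_mat n n" "det M \<noteq> 0"
  shows "M * ((1 / det M) \<cdot>\<^sub>m adj_mat M) = 1\<^sub>m n" "((1 / det M) \<cdot>\<^sub>m adj_mat M) * M = 1\<^sub>m n"
  using assms adj_mat[OF assms(1)]
  by (auto simp: mult_smult_distrib[of _ n n _ n] mult_smult_assoc_mat[of _ n n _ n])

lemma perturbed_identity_inverse:
  fixes E :: "real mat"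
  assumes E: "E \<in> carrier_mat n n" "\<forall>i<n. \<forall>j<n. \<bar>E $$ (i,j)\<bar> \<le> e" "n * e \<le> 1/2"
  obtains Y where "Y \<in> carrier_mat n n" "(1\<^sub>m n - E) * Y = 1\<^sub>m n" "Y * (1\<^sub>m n - E) = 1\<^sub>m n"
    "\<forall>i<n. \<forall>j<n. \<bar>Y $$ (i,j)\<bar> \<le> 2"
proof -
  let ?M = "1\<^sub>m n - E"
  have M: "?M \<in> carrier_mat n n"
    using E by (simp add: minus_carrier_mat)
  have det: "det ?M \<noteq> 0"
  proof
    assume "det ?M = 0"
    then obtain v where v: "v \<in> carrier_vec n" "v \<noteq> 0\<^sub>v n" "?M *\<^sub>v v = 0\<^sub>v n"
      using det_0_iff_vec_prod_zero[OF M] by auto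
    have "\<bar>v $ k\<bar> \<le> 2 * 0" if "k < n" for k
      by (rule abs_vec_le_of_perturbed_identity[OF E v(1) _ that]) (use v(3) in simp)
    then have "v = 0\<^sub>v n"
      using v(1) by (intro eq_vecI) auto
    with v(2) show False ..
  qed
  define Y where "Y = (1 / det ?M) \<cdot>\<^sub>m adj_mat ?M"
  have Y: "Y \<in> carrier_mat n n"
    unfolding Y_def using adj_mat(1)[OF M] by simp
  note inverse = inverse_by_adj_mat[OF M det, folded Y_def]
  have "\<bar>Y $$ (k,j)\<bar> \<le> 2" if "k < n" "j < n" for k j
  proof -
    have "?M *\<^sub>v col Y j = unit_vec n j"
      using col_mult2[OF M Y \<open>j < n\<close>] inverse(1) \<open>j < n\<close> by simp
    then have "\<bar>col Y j $ k\<bar> \<le> 2 * 1"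
      by (intro abs_vec_le_of_perturbed_identity[OF E]) (use Y that in auto)
    then show ?thesis
      using Y that by simp
  qed
  then show thesis
    using that Y inverse by blast
qed

lemma perturbed_inverse_mult_positive:
  fixes S T :: "real mat"
  assumes S: "S \<in> carrier_mat n n" "\<forall>i<n. \<forall>j<n. \<bar>S $$ (i,j)\<bar> \<le> s"
    "\<forall>i<n. \<forall>j<n. l \<le> (1\<^sub>m n + S) $$ (i,j)"
    and T: "T \<in> carrier_mat n n" "\<forall>i<n. \<forall>j<n. \<bar>T $$ (i,j)\<bar> \<le> t"
    and small: "real n ^ 2 * s * t \<le> 1/2" "2 * real n ^ 3 * s ^ 2 * t < l"
  obtains Y where "Y \<in> carrier_mat n n" "(1\<^sub>m n - S * T) * Y = 1\<^sub>m n" "Y * (1\<^sub>m n - S * T) = 1\<^sub>m n"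
    "\<forall>i<n. \<forall>j<n. 0 < (1\<^sub>m n + Y * S) $$ (i,j)"
proof -
  define E where "E = S * T"
  have E: "E \<in> carrier_mat n n" "\<forall>i<n. \<forall>j<n. \<bar>E $$ (i,j)\<bar> \<le> n * s * t"
    unfolding E_def using S T abs_mult_mat_entry_le[OF S(1) T(1) S(2) T(2)] by auto
  obtain Y where Y: "Y \<in> carrier_mat n n" "(1\<^sub>m n - E) * Y = 1\<^sub>m n" "Y * (1\<^sub>m n - E) = 1\<^sub>m n"
    "\<forall>i<n. \<forall>j<n. \<bar>Y $$ (i,j)\<bar> \<le> 2"
    using perturbed_identity_inverse[OF E] small(1) by (metis mult.assoc power2_eq_square)
  have YE: "Y * E \<in> carrier_mat n n"
    "\<forall>i<n. \<forall>j<n. \<bar>(Y * E) $$ (i,j)\<bar> \<le> real n * 2 * (real n * s * t)"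
    using Y E abs_mult_mat_entry_le[OF Y(1) E(1) Y(4) E(2)] by auto
  have "Y * S - (Y * E) * S = (Y * (1\<^sub>m n - E)) * S"
    using mult_minus_distrib_mat[OF Y(1) one_carrier_mat E(1)]
      minus_mult_distrib_mat[OF Y(1) YE(1) S(1)] Y(1) by simp
  also have "\<dots> = S"
    using Y(3) S(1) by simp
  finally have YS: "Y * S - (Y * E) * S = S" .
  have "0 < (1\<^sub>m n + Y * S) $$ (i,j)" if "i < n" "j < n" for i j
  proof -
    have "\<bar>((Y * E) * S) $$ (i,j)\<bar> \<le> real n * (real n * 2 * (real n * s * t)) * s"
      by (rule abs_mult_mat_entry_le[OF YE(1) S(1) YE(2) S(2) that])
    also have "\<dots> < l"
      using small(2) by (simp add: power2_eq_square power3_eq_cube algebra_simps)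
    finally have "\<bar>((Y * E) * S) $$ (i,j)\<bar> < l" .
    moreover have "(1\<^sub>m n + Y * S) $$ (i,j) = (1\<^sub>m n + S) $$ (i,j) + ((Y * E) * S) $$ (i,j)"
      using arg_cong[OF YS, of "\<lambda>M. M $$ (i,j)"] that Y(1) YE(1) S(1) by simp
    moreover have "l \<le> (1\<^sub>m n + S) $$ (i,j)"
      using S(3) that by blast
    ultimately show ?thesis
      by linarith
  qed
  then show thesis
    using that Y unfolding E_def by blast
qed

section \<open>Complex matrices with real entries\<close>

lemma invertible_matI:
  assumes "M \<in> carrier_mat n n" "N \<in> carrier_mat n n" "M * N = 1\<^sub>m n" "N * M = 1\<^sub>m n"
  shows "invertible_mat M"
  using assms unfolding invertible_mat_def inverts_mat_def square_mat.simps by auto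

lemma invertible_mat_det_nonzero:
  fixes M :: "'a::field mat"
  assumes "M \<in> carrier_mat n n" "invertible_mat M"
  shows "det M \<noteq> 0"
proof -
  obtain N where N: "M * N = 1\<^sub>m n" "N * M = 1\<^sub>m (dim_row N)"
    using assms unfolding invertible_mat_def inverts_mat_def by auto
  then have "N \<in> carrier_mat n n"
    using assms(1) by (metis carrier_matD(2) carrier_matI index_mult_mat(3) index_one_mat(3))
  then have "det M * det N = 1"
    using det_mult[OF assms(1)] N(1) by (metis det_one)
  then show ?thesis
    by auto
qed

lemma mat_inv_eqI:
  assumes "M \<in> carrier_mat n n" "N \<in> carrier_mat n n" "M * N = 1\<^sub>m n" "N * M = 1\<^sub>m n"
  shows "mat_inv n M = N"
proof -
  have inv: "mat_inv n M \<in> carrier_mat n n \<and> M * mat_inv n M = 1\<^sub>m n \<and> mat_inv n M * M = 1\<^sub>m n"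
    unfolding mat_inv_def by (rule someI[of _ N]) (use assms in blast)
  have "mat_inv n M = mat_inv n M * (M * N)"
    using inv assms(3) right_mult_one_mat[of "mat_inv n M" n n] by simp
  also have "\<dots> = (mat_inv n M * M) * N"
    using inv assms by (intro assoc_mult_mat[symmetric]) auto
  also have "\<dots> = N"
    using inv assms(2) by simp
  finally show ?thesis .
qed

lemma mat_inv_adj_mat:
  assumes "M \<in> carrier_mat n n" "det M \<noteq> 0"
  shows "mat_inv n M = (1 / det M) \<cdot>\<^sub>m adj_mat M"
  using assms by (intro mat_inv_eqI inverse_by_adj_mat) (auto simp: adj_mat)

lemma map_mat_of_real_Re:
  assumes "\<forall>i<dim_row M. \<forall>j<dim_col M. Im (M $$ (i,j)) = 0"
  shows "map_mat complex_of_real (map_mat Re M) = M"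
  using assms by (intro eq_matI) (auto simp: complex_eq_iff)

lemma mat_pos_of_real:
  assumes "\<forall>i<dim_row M. \<forall>j<dim_col M. 0 < M $$ (i,j)"
  shows "mat_pos (map_mat complex_of_real M)"
  using assms unfolding mat_pos_def by (auto simp: less_complex_def)

lemma of_real_perturbed_inverse_mult_positive:
  fixes S T Y :: "real mat"
  assumes S: "S \<in> carrier_mat n n" and T: "T \<in> carrier_mat n n" and Y: "Y \<in> carrier_mat n n"
    and inverse: "(1\<^sub>m n - S * T) * Y = 1\<^sub>m n" "Y * (1\<^sub>m n - S * T) = 1\<^sub>m n"
    and pos: "\<forall>i<n. \<forall>j<n. 0 < (1\<^sub>m n + Y * S) $$ (i,j)"
  defines "S' \<equiv> map_mat complex_of_real S" and "T' \<equiv> map_mat complex_of_real T"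
  shows "invertible_mat (1\<^sub>m n - S' * T') \<and> mat_pos (1\<^sub>m n + mat_inv n (1\<^sub>m n - S' * T') * S')"
proof -
  let ?h = "map_mat complex_of_real"
  have ST: "S * T \<in> carrier_mat n n"
    using S T by simp
  have "?h (1\<^sub>m n - S * T) = 1\<^sub>m n - ?h (S * T)"
    using S T by (intro eq_matI) auto
  then have M: "1\<^sub>m n - S' * T' = ?h (1\<^sub>m n - S * T)"
    unfolding S'_def T'_def by (metis of_real_hom.mat_hom_mult[OF S T])
  have M_carrier: "1\<^sub>m n - S * T \<in> carrier_mat n n"
    using ST by (simp add: minus_carrier_mat)
  have inv: "(1\<^sub>m n - S' * T') * ?h Y = 1\<^sub>m n" "?h Y * (1\<^sub>m n - S' * T') = 1\<^sub>m n"
    unfolding M of_real_hom.mat_hom_mult[OF M_carrier Y, symmetric]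
      of_real_hom.mat_hom_mult[OF Y M_carrier, symmetric] inverse
    by (simp_all add: of_real_hom.mat_hom_one)
  have carrier: "1\<^sub>m n - S' * T' \<in> carrier_mat n n" "?h Y \<in> carrier_mat n n"
    using M M_carrier Y by auto
  have "?h (1\<^sub>m n + Y * S) = 1\<^sub>m n + ?h (Y * S)"
    using Y S by (intro eq_matI) auto
  then have "1\<^sub>m n + ?h Y * S' = ?h (1\<^sub>m n + Y * S)"
    unfolding S'_def by (metis of_real_hom.mat_hom_mult[OF Y S])
  moreover have "mat_pos (?h (1\<^sub>m n + Y * S))"
    using pos Y S by (intro mat_pos_of_real) auto
  ultimately show ?thesis
    using invertible_matI[OF carrier inv] mat_inv_eqI[OF carrier inv] by simp
qed

lemma eventually_perturbed_inverse_mult_positive: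
  fixes S T :: "real \<Rightarrow> complex mat" and e \<alpha> :: real
  assumes "3 * e < \<alpha>" "0 < e"
    and "\<forall>\<^sub>F x in at_top. S x \<in> carrier_mat n n \<and> (\<forall>i<n. \<forall>j<n. Im (S x $$ (i,j)) = 0
      \<and> cmod (S x $$ (i,j)) \<le> exp (e * x) \<and> exp (- (e * x)) \<le> Re ((1\<^sub>m n + S x) $$ (i,j)))"
    and "\<forall>\<^sub>F x in at_top. T x \<in> carrier_mat n n \<and> (\<forall>i<n. \<forall>j<n. Im (T x $$ (i,j)) = 0
      \<and> cmod (T x $$ (i,j)) \<le> exp (- (\<alpha> * x)))"
  shows "\<forall>\<^sub>F x in at_top. invertible_mat (1\<^sub>m n - S x * T x)
    \<and> mat_pos (1\<^sub>m n + mat_inv n (1\<^sub>m n - S x * T x) * S x)"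
  using assms(3,4) exp_tradeoff_eventually_small[OF assms(1,2), of n]
proof eventually_elim
  case (elim x)
  define Sr where "Sr = map_mat Re (S x)"
  define Tr where "Tr = map_mat Re (T x)"
  have S_eq: "S x = map_mat complex_of_real Sr" and T_eq: "T x = map_mat complex_of_real Tr"
    unfolding Sr_def Tr_def using elim by (auto intro!: map_mat_of_real_Re[symmetric])
  have S_entry: "cmod (S x $$ (i,j)) \<le> exp (e * x) \<and> exp (- (e * x)) \<le> Re ((1\<^sub>m n + S x) $$ (i,j))"
    and T_entry: "cmod (T x $$ (i,j)) \<le> exp (- (\<alpha> * x))" if "i < n" "j < n" for i j
    using elim that by blast+
  have Sr_entry: "\<bar>Sr $$ (i,j)\<bar> \<le> exp (e * x) \<and> exp (- (e * x)) \<le> (1\<^sub>m n + Sr) $$ (i,j)"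
    and Tr_entry: "\<bar>Tr $$ (i,j)\<bar> \<le> exp (- (\<alpha> * x))" if "i < n" "j < n" for i j
  proof -
    have "Sr $$ (i,j) = Re (S x $$ (i,j))" "(1\<^sub>m n + Sr) $$ (i,j) = Re ((1\<^sub>m n + S x) $$ (i,j))"
      "Tr $$ (i,j) = Re (T x $$ (i,j))"
      using elim that unfolding Sr_def Tr_def by auto
    then show "\<bar>Sr $$ (i,j)\<bar> \<le> exp (e * x) \<and> exp (- (e * x)) \<le> (1\<^sub>m n + Sr) $$ (i,j)"
      "\<bar>Tr $$ (i,j)\<bar> \<le> exp (- (\<alpha> * x))"
      using S_entry[OF that] T_entry[OF that] abs_Re_le_cmod[of "S x $$ (i,j)"]
        abs_Re_le_cmod[of "T x $$ (i,j)"] by auto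
  qed
  have Sr: "Sr \<in> carrier_mat n n" "\<forall>i<n. \<forall>j<n. \<bar>Sr $$ (i,j)\<bar> \<le> exp (e * x)"
    "\<forall>i<n. \<forall>j<n. exp (- (e * x)) \<le> (1\<^sub>m n + Sr) $$ (i,j)"
    and Tr: "Tr \<in> carrier_mat n n" "\<forall>i<n. \<forall>j<n. \<bar>Tr $$ (i,j)\<bar> \<le> exp (- (\<alpha> * x))"
    using elim Sr_entry Tr_entry unfolding Sr_def Tr_def by auto
  obtain Y where "Y \<in> carrier_mat n n" "(1\<^sub>m n - Sr * Tr) * Y = 1\<^sub>m n" "Y * (1\<^sub>m n - Sr * Tr) = 1\<^sub>m n"
    "\<forall>i<n. \<forall>j<n. 0 < (1\<^sub>m n + Y * Sr) $$ (i,j)"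
    using perturbed_inverse_mult_positive[OF Sr Tr] elim by blast
  from of_real_perturbed_inverse_mult_positive[OF Sr(1) Tr(1) this]
  show ?case
    unfolding S_eq T_eq .
qed

lemma comm_ring_hom_poly: "comm_ring_hom (\<lambda>p. poly p z)"
  by unfold_locales auto

lemma semiring_hom_poly: "semiring_hom (\<lambda>p. poly p z)"
  by unfold_locales auto

lemma (in comm_ring_hom) hom_adj_mat: "adj_mat (map_mat hom A) = map_mat hom (adj_mat A)"
proof -
  have "mat_delete (map_mat hom A) i j = map_mat hom (mat_delete A i j)" for i j
    by (intro eq_matI) (auto simp: mat_delete_def)
  then show ?thesis
    unfolding adj_mat_def cofactor_def by (intro eq_matI) (auto simp: hom_mult hom_power hom_uminus)
qed

definition matrix_pencil :: "'a::comm_ring_1 mat \<Rightarrow> 'a mat \<Rightarrow> 'a poly mat" where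
  "matrix_pencil A B = mat (dim_row A) (dim_col A) (\<lambda>ij. [:A $$ ij, B $$ ij:])"

lemma map_mat_poly_matrix_pencil:
  assumes "A \<in> carrier_mat nr nc" "B \<in> carrier_mat nr nc"
  shows "map_mat (\<lambda>p. poly p z) (matrix_pencil A B) = A + z \<cdot>\<^sub>m B"
  using assms by (intro eq_matI) (auto simp: matrix_pencil_def)

section \<open>The scattering matrix on the imaginary axis\<close>

lemma imaginary_axis_matrix_pencil:
  fixes A B :: "complex mat" and x :: real
  assumes "A \<in> carrier_mat n n" "B \<in> carrier_mat n n"
  shows "map_mat (\<lambda>p. poly p (of_real x)) (matrix_pencil A (- B)) = A + (\<i> * (\<i> * of_real x)) \<cdot>\<^sub>m B"
    and "map_mat (\<lambda>p. poly p (of_real x)) (matrix_pencil A B) = A - (\<i> * (\<i> * of_real x)) \<cdot>\<^sub>m B"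
  using assms map_mat_poly_matrix_pencil[of A n n "- B"] map_mat_poly_matrix_pencil[of A n n B]
  by (auto intro!: eq_matI)

lemma scat_imaginary_axis_adj_mat:
  fixes A B :: "complex mat" and x :: real
  assumes A: "A \<in> carrier_mat n n" and B: "B \<in> carrier_mat n n"
    and invertible: "invertible_mat (A + (\<i> * (\<i> * of_real x)) \<cdot>\<^sub>m B)"
  defines "P \<equiv> matrix_pencil A (- B)"
  shows "poly (det P) (of_real x) \<noteq> 0"
    and "scat (\<i> * of_real x) A B = - ((1 / poly (det P) (of_real x)) \<cdot>\<^sub>m
      map_mat (\<lambda>p. poly p (of_real x)) (adj_mat P * matrix_pencil A B))"
proof -
  note ev = comm_ring_hom_poly[of "complex_of_real x"]
  let ?ev = "map_mat (\<lambda>p. poly p (complex_of_real x))"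
  have P: "P \<in> carrier_mat n n"
    using A unfolding P_def matrix_pencil_def by auto
  have N: "A + (\<i> * (\<i> * of_real x)) \<cdot>\<^sub>m B = ?ev P"
    and Nm: "A - (\<i> * (\<i> * of_real x)) \<cdot>\<^sub>m B = ?ev (matrix_pencil A B)"
    unfolding P_def using imaginary_axis_matrix_pencil[OF A B] by simp_all
  have "det (?ev P) \<noteq> 0"
    using invertible P unfolding N by (intro invertible_mat_det_nonzero[of _ n]) auto
  then show det: "poly (det P) (of_real x) \<noteq> 0"
    by (simp add: comm_ring_hom.hom_det[OF ev])
  have "mat_inv n (?ev P) = (1 / poly (det P) (of_real x)) \<cdot>\<^sub>m ?ev (adj_mat P)"
    using mat_inv_adj_mat[of "?ev P" n] P det
    by (simp add: comm_ring_hom.hom_adj_mat[OF ev] comm_ring_hom.hom_det[OF ev])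
  then show "scat (\<i> * of_real x) A B = - ((1 / poly (det P) (of_real x)) \<cdot>\<^sub>m
      ?ev (adj_mat P * matrix_pencil A B))"
    unfolding scat_def N Nm using A P adj_mat(1)[OF P]
    by (simp add: semiring_hom.mat_hom_mult[OF semiring_hom_poly, of _ n n _ n]
        mult_smult_assoc_mat[of _ n n _ n] matrix_pencil_def)
qed

lemma scat_imaginary_axis_rational:
  fixes A B :: "complex mat"
  assumes A: "A \<in> carrier_mat n n" and B: "B \<in> carrier_mat n n" and "strictly_positive A B"
  defines "P \<equiv> matrix_pencil A (- B)"
  shows "det P \<noteq> 0"
    and "\<forall>\<^sub>F x in at_top. scat (\<i> * of_real x) A B \<in> carrier_mat n n
      \<and> mat_pos (1\<^sub>m n + scat (\<i> * of_real x) A B)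
      \<and> (\<forall>i<n. \<forall>j<n. scat (\<i> * of_real x) A B $$ (i,j) * poly (det P) (of_real x)
          = poly ((- (adj_mat P * matrix_pencil A B)) $$ (i,j)) (of_real x))"
proof -
  obtain \<kappa>0 where \<kappa>0: "\<And>x. x \<ge> \<kappa>0 \<Longrightarrow> invertible_mat (A + (\<i> * (\<i> * of_real x)) \<cdot>\<^sub>m B)
      \<and> mat_pos (1\<^sub>m n + scat (\<i> * of_real x) A B)"
    using assms(3) A unfolding strictly_positive_def by auto
  note cramer = scat_imaginary_axis_adj_mat[OF A B, folded P_def]
  show "det P \<noteq> 0"
    using cramer(1)[of \<kappa>0] \<kappa>0[of \<kappa>0] by auto
  have M: "adj_mat P * matrix_pencil A B \<in> carrier_mat n n"
    using adj_mat(1)[of P n] A unfolding P_def by (simp add: matrix_pencil_def)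
  then have dims: "dim_row (adj_mat P * matrix_pencil A B) = n"
    "dim_col (adj_mat P * matrix_pencil A B) = n"
    by auto
  show "\<forall>\<^sub>F x in at_top. scat (\<i> * of_real x) A B \<in> carrier_mat n n
      \<and> mat_pos (1\<^sub>m n + scat (\<i> * of_real x) A B)
      \<and> (\<forall>i<n. \<forall>j<n. scat (\<i> * of_real x) A B $$ (i,j) * poly (det P) (of_real x)
          = poly ((- (adj_mat P * matrix_pencil A B)) $$ (i,j)) (of_real x))"
    using eventually_ge_at_top[of \<kappa>0]
  proof eventually_elim
    case (elim x)
    then have "invertible_mat (A + (\<i> * (\<i> * of_real x)) \<cdot>\<^sub>m B)"
      using \<kappa>0 by blast
    note det = cramer(1)[OF this] and scat_eq = cramer(2)[OF this]
    show ?case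
      using \<kappa>0[OF elim] M dims det unfolding scat_eq by simp
  qed
qed

lemma scat_imaginary_axis_eventually_bounds:
  fixes A B :: "complex mat"
  assumes "A \<in> carrier_mat n n" "B \<in> carrier_mat n n" "strictly_positive A B" "e > 0"
  shows "\<forall>\<^sub>F x in at_top. scat (\<i> * of_real x) A B \<in> carrier_mat n n
    \<and> (\<forall>i<n. \<forall>j<n. Im (scat (\<i> * of_real x) A B $$ (i,j)) = 0
      \<and> cmod (scat (\<i> * of_real x) A B $$ (i,j)) \<le> exp (e * x)
      \<and> exp (- (e * x)) \<le> Re ((1\<^sub>m n + scat (\<i> * of_real x) A B) $$ (i,j)))"
  using rational_mat_eventually_bounds[OF scat_imaginary_axis_rational(1)[OF assms(1-3)] assms(4)
      scat_imaginary_axis_rational(2)[OF assms(1-3)]] .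

lemma Tmat_imaginary_axis_eventually_bounds:
  assumes "\<forall>l<nI. \<alpha> \<le> a l"
  shows "\<forall>\<^sub>F x in at_top. Tmat nE nI a (\<i> * of_real x) \<in> carrier_mat (nE + 2 * nI) (nE + 2 * nI)
    \<and> (\<forall>i<nE + 2 * nI. \<forall>j<nE + 2 * nI. Im (Tmat nE nI a (\<i> * of_real x) $$ (i,j)) = 0
      \<and> cmod (Tmat nE nI a (\<i> * of_real x) $$ (i,j)) \<le> exp (- (\<alpha> * x)))"
  using eventually_ge_at_top[of 0]
proof eventually_elim
  case (elim x)
  have "\<alpha> * x \<le> x * a l" if "l < nI" for l
    using mult_left_mono[OF assms[rule_format, OF that] elim] by (simp add: mult.commute)
  then show ?case
    unfolding Tmat_def by (auto simp: Im_exp norm_exp_eq_Re)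
qed

theorem lemma4p6:
  fixes nE nI :: nat and a :: "nat \<Rightarrow> real" and A B :: "complex mat"
  assumes "nI \<noteq> 0"
    and "\<forall>i < nI. a i > 0"
    and "max_isotropic (nE + 2 * nI) A B"
    and "strictly_positive A B"
  shows "\<exists>\<kappa>1::real \<ge> 0. \<forall>\<kappa> \<ge> \<kappa>1.
    invertible_mat (A + (\<i> * (\<i> * of_real \<kappa>)) \<cdot>\<^sub>m B)
    \<and> invertible_mat (1\<^sub>m (nE + 2 * nI)
         - scat (\<i> * of_real \<kappa>) A B * Tmat nE nI a (\<i> * of_real \<kappa>))
    \<and> mat_pos (1\<^sub>m (nE + 2 * nI)
         + mat_inv (nE + 2 * nI) (1\<^sub>m (nE + 2 * nI)
              - scat (\<i> * of_real \<kappa>) A B * Tmat nE nI a (\<i> * of_real \<kappa>))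
           * scat (\<i> * of_real \<kappa>) A B)"
proof -
  let ?n = "nE + 2 * nI"
  have A: "A \<in> carrier_mat ?n ?n" and B: "B \<in> carrier_mat ?n ?n"
    using assms(3) unfolding max_isotropic_def by auto
  define \<alpha> where "\<alpha> = Min (a ` {..<nI})"
  have "\<alpha> \<in> a ` {..<nI}"
    unfolding \<alpha>_def using assms(1) by (intro Min_in) auto
  then have "0 < \<alpha>" and \<alpha>_le: "\<forall>l<nI. \<alpha> \<le> a l"
    using assms(2) unfolding \<alpha>_def by auto
  have invertible: "\<forall>\<^sub>F \<kappa> in at_top. invertible_mat (A + (\<i> * (\<i> * of_real \<kappa>)) \<cdot>\<^sub>m B)"
    using assms(4) unfolding strictly_positive_def eventually_at_top_linorder by blast
  have "0 < \<alpha> / 4" "3 * (\<alpha> / 4) < \<alpha>"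
    using \<open>0 < \<alpha>\<close> by auto
  note perturbation = eventually_perturbed_inverse_mult_positive[OF this(2,1)
      scat_imaginary_axis_eventually_bounds[OF A B assms(4) this(1)]
      Tmat_imaginary_axis_eventually_bounds[OF \<alpha>_le]]
  show ?thesis
    using eventually_conj[OF invertible perturbation] by (rule eventually_at_top_nonneg_threshold)
qed

end
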